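(* Let $\mathcal L$ be a cabled linkage in $\mathbb R^n$ and $W\subset\mathcal V(\mathcal L)$. If $\mathcal{SC}(\mathcal L,W)$ is compact and nonempty, then for each vertex in $W$ there is a path in $L$ from it to a fixed vertex.
   Context: A cabled linkage in $\mathbb R^n$ is $\mathcal L=(L,\ell,V,\mu,F)$: $L$ a finite one-dimensional simplicial complex (vertex set $\mathcal V(L)=\mathcal V(\mathcal L)$, edge set $\mathcal E(L)$), $\ell\colon\mathcal E(L)\to(0,\infty)$, $V\subset\mathcal V(L)$ the set of fixed vertices, $\mu\colon V\to\mathbb R^n$, $F\subset\mathcal E(L)$ flexible edges. $\mathcal C(\mathcal L)=\{\varphi\colon\mathcal V(L)\to\mathbb R^n\mid\varphi(v)=\mu(v)\ (v\in V),\ |\varphi(v)-\varphi(w)|\le\ell(vw)\ (vw\in F),\ |\varphi(v)-\varphi(w)|=\ell(vw)\ (vw\in\mathcal E(L)\setminus F)\}$ and $\mathcal{SC}(\mathcal L,W)=\{\varphi|_W\mid\varphi\in\mathcal C(\mathcal L)\}\subset(\mathbb R^n)^W$. *)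

theory Defs
  imports "HOL-Analysis.Analysis"
begin

definition simplicial_graph :: "'v set \<Rightarrow> 'v set set \<Rightarrow> bool" where
  "simplicial_graph VL EL \<longleftrightarrow> finite VL \<and>
     (\<forall>e\<in>EL. \<exists>a b. a \<in> VL \<and> b \<in> VL \<and> a \<noteq> b \<and> e = {a, b})"

definition cabled_linkage ::
  "'v set \<Rightarrow> 'v set set \<Rightarrow> ('v set \<Rightarrow> real) \<Rightarrow> 'v set \<Rightarrow> ('v \<Rightarrow> real^'n) \<Rightarrow> 'v set set \<Rightarrow> bool" where
  "cabled_linkage VL EL l V \<mu> F \<longleftrightarrow> simplicial_graph VL EL \<and>
     (\<forall>e\<in>EL. l e > 0) \<and> V \<subseteq> VL \<and> F \<subseteq> EL"

definition config_space ::
  "'v set \<Rightarrow> 'v set set \<Rightarrow> ('v set \<Rightarrow> real) \<Rightarrow> 'v set \<Rightarrow> ('v \<Rightarrow> real^'n) \<Rightarrow> 'v set set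
   \<Rightarrow> ('v \<Rightarrow> real^'n) set" where
  "config_space VL EL l V \<mu> F = {\<phi> \<in> extensional VL.
     (\<forall>v\<in>V. \<phi> v = \<mu> v) \<and>
     (\<forall>v\<in>VL. \<forall>w\<in>VL. {v, w} \<in> F \<longrightarrow> dist (\<phi> v) (\<phi> w) \<le> l {v, w}) \<and>
     (\<forall>v\<in>VL. \<forall>w\<in>VL. {v, w} \<in> EL - F \<longrightarrow> dist (\<phi> v) (\<phi> w) = l {v, w})}"

definition sub_config_space ::
  "'v set \<Rightarrow> 'v set set \<Rightarrow> ('v set \<Rightarrow> real) \<Rightarrow> 'v set \<Rightarrow> ('v \<Rightarrow> real^'n) \<Rightarrow> 'v set set
   \<Rightarrow> 'v set \<Rightarrow> ('v \<Rightarrow> real^'n) set" where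
  "sub_config_space VL EL l V \<mu> F W = (\<lambda>\<phi>. restrict \<phi> W) ` config_space VL EL l V \<mu> F"

definition adj :: "'v set set \<Rightarrow> ('v \<times> 'v) set" where
  "adj EL = {(a, b). {a, b} \<in> EL}"

end

theory Submission
  imports Defs
begin

text \<open>If a vertex w is joined to no fixed vertex, the connected component of w contains no
  fixed vertex, and every edge of the linkage lies either inside or outside that component.
  Translating a configuration on the component by an arbitrary vector t therefore preserves all
  edge lengths and fixed positions, so the value at w of the configurations ranges over all of
  R^n. But the evaluation at w of a compact subset of (R^n)^W is compact, hence bounded.\<close>

lemma adj_rtrancl_edge_closed:
  assumes "{a, b} \<in> EL"
  shows "(w, a) \<in> (adj EL)\<^sup>* \<longleftrightarrow> (w, b) \<in> (adj EL)\<^sup>*"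
proof -
  have "(a, b) \<in> adj EL" "(b, a) \<in> adj EL"
    using assms by (auto simp: adj_def insert_commute)
  then show ?thesis by (meson rtrancl.rtrancl_into_rtrancl)
qed

lemma config_space_translate:
  assumes \<phi>: "\<phi> \<in> config_space VL EL l V \<mu> F"
    and "F \<subseteq> EL" and "C \<inter> V = {}"
    and closed: "\<And>a b. {a, b} \<in> EL \<Longrightarrow> a \<in> C \<longleftrightarrow> b \<in> C"
  shows "(\<lambda>u. if u \<in> VL \<inter> C then \<phi> u + t else \<phi> u) \<in> config_space VL EL l V \<mu> F"
proof -
  define \<psi> where "\<psi> = (\<lambda>u. if u \<in> VL \<inter> C then \<phi> u + t else \<phi> u)"
  have "\<psi> \<in> extensional VL"
    using \<phi> by (auto simp: \<psi>_def config_space_def extensional_def)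
  moreover have "\<forall>v\<in>V. \<psi> v = \<mu> v"
    using \<phi> \<open>C \<inter> V = {}\<close> by (auto simp: \<psi>_def config_space_def)
  moreover have "dist (\<psi> a) (\<psi> b) = dist (\<phi> a) (\<phi> b)"
    if "a \<in> VL" "b \<in> VL" "{a, b} \<in> EL" for a b
    using that closed[OF that(3)] by (cases "a \<in> C") (simp_all add: \<psi>_def dist_norm)
  ultimately have "\<psi> \<in> config_space VL EL l V \<mu> F"
    using \<phi> \<open>F \<subseteq> EL\<close> by (auto simp: config_space_def)
  then show ?thesis
    by (simp add: \<psi>_def)
qed

lemma eval_sub_config_space_eq_UNIV:
  assumes "F \<subseteq> EL" and "w \<in> W" and "W \<subseteq> VL"
    and "sub_config_space VL EL l V \<mu> F W \<noteq> {}"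
    and unconnected: "\<forall>v\<in>V. (w, v) \<notin> (adj EL)\<^sup>*"
  shows "(\<lambda>f. f w) ` sub_config_space VL EL l V \<mu> F W = UNIV"
proof -
  obtain \<phi> where \<phi>: "\<phi> \<in> config_space VL EL l V \<mu> F"
    using assms(4) by (auto simp: sub_config_space_def)
  define C where "C = {u. (w, u) \<in> (adj EL)\<^sup>*}"
  have "C \<inter> V = {}"
    using unconnected by (auto simp: C_def)
  moreover have "a \<in> C \<longleftrightarrow> b \<in> C" if "{a, b} \<in> EL" for a b
    using adj_rtrancl_edge_closed[OF that] by (simp add: C_def)
  ultimately have translate: "(\<lambda>u. if u \<in> VL \<inter> C then \<phi> u + t else \<phi> u)
      \<in> config_space VL EL l V \<mu> F" for t
    using config_space_translate[OF \<phi> \<open>F \<subseteq> EL\<close>] by blast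
  have "\<phi> w + t \<in> (\<lambda>f. f w) ` sub_config_space VL EL l V \<mu> F W" for t
  proof -
    have "w \<in> VL \<inter> C"
      using assms(2,3) by (auto simp: C_def)
    moreover have "restrict (\<lambda>u. if u \<in> VL \<inter> C then \<phi> u + t else \<phi> u) W
        \<in> sub_config_space VL EL l V \<mu> F W"
      using translate[of t] by (simp add: sub_config_space_def)
    ultimately show ?thesis
      using \<open>w \<in> W\<close> by (auto intro: rev_image_eqI)
  qed
  from this[of "x - \<phi> w" for x] show ?thesis
    by auto
qed

lemma compactin_product_projection_bounded:
  fixes S :: "('i \<Rightarrow> 'a::metric_space) set"
  assumes "compactin (product_topology (\<lambda>_. euclidean) I) S" and "i \<in> I"
  shows "bounded ((\<lambda>f. f i) ` S)"
proof -
  have "compactin euclidean ((\<lambda>f. f i) ` S)"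
    using image_compactin[OF assms(1) continuous_map_product_projection[OF assms(2)]] .
  then show ?thesis
    by (simp add: compact_imp_bounded)
qed

theorem lemma3p9:
  fixes VL :: "'v set" and EL :: "'v set set" and l :: "'v set \<Rightarrow> real"
    and V :: "'v set" and \<mu> :: "'v \<Rightarrow> real^'n" and F :: "'v set set" and W :: "'v set"
  assumes "cabled_linkage VL EL l V \<mu> F"
    and "W \<subseteq> VL"
    and "compactin (product_topology (\<lambda>_. euclidean) W) (sub_config_space VL EL l V \<mu> F W)"
    and "sub_config_space VL EL l V \<mu> F W \<noteq> {}"
  shows "\<forall>w\<in>W. \<exists>v\<in>V. (w, v) \<in> (adj EL)\<^sup>*"
proof (rule ccontr)
  assume "\<not> ?thesis"
  then obtain w where "w \<in> W" and "\<forall>v\<in>V. (w, v) \<notin> (adj EL)\<^sup>*"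
    by blast
  moreover have "F \<subseteq> EL"
    using assms(1) by (simp add: cabled_linkage_def)
  ultimately have "(\<lambda>f. f w) ` sub_config_space VL EL l V \<mu> F W = UNIV"
    using eval_sub_config_space_eq_UNIV[of F EL w W VL] assms(2,4) by simp
  moreover have "bounded ((\<lambda>f. f w) ` sub_config_space VL EL l V \<mu> F W)"
    using compactin_product_projection_bounded[OF assms(3) \<open>w \<in> W\<close>] .
  ultimately show False
    using not_bounded_UNIV by simp
qed

end
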